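(* Let $x\in\mathbb{R}^N$, $\eta_x>0$, and let $\phi:\mathbb{R}^N\to\mathbb{R}$ satisfy $\phi\in C^2(\bar B_{\eta_x}(x))$ with $p_x=\nabla\phi(x)\neq0$. Then for every $\epsilon\in(0,\eta_x)$ with $\epsilon|\nabla^2\phi(x)|\le|p_x|$: $$\Big|c_s s\,\epsilon^{-2s}\cdot\frac12\Big(\sup_{B_\epsilon(x)}\phi+\inf_{B_\epsilon(x)}\phi-2\phi(x)\Big)-\int_0^\epsilon L_\phi\Big(x,t\frac{p_x}{|p_x|},t\frac{p_x}{|p_x|}\Big)\mathrm{d}\mu_s(t)\Big|\le c_s s\Big(2\epsilon^{3-2s}\frac{|\nabla^2\phi(x)|^2}{|p_x|}+\epsilon^{2-2s}\sup_{y\in B_\epsilon(x)}|\nabla^2\phi(y)-\nabla^2\phi(x)|\Big).$$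
   Context: Fix $N\ge1$ and $s\in(\frac12,1)$. Let $C_s=\frac{4^s s\,\Gamma(\frac12+s)}{\pi^{1/2}\Gamma(1-s)}$ and $c_s=\frac{C_s}{s(1-s)}$. Let $\mu_s$ be the Borel measure on $(0,\infty)$ with $\mathrm{d}\mu_s(t)=C_s t^{-1-2s}\,\mathrm{d}t$. For $\phi:\mathbb{R}^N\to\mathbb{R}$ and $x,y,\tilde y\in\mathbb{R}^N$ let $L_\phi(x,y,\tilde y)=\phi(x+y)+\phi(x-\tilde y)-2\phi(x)$. $|\nabla^2\phi(\cdot)|$ denotes the operator norm of the Hessian matrix. *)

theory Defs
  imports "HOL-Analysis.Analysis"
begin

definition C_s :: "real \<Rightarrow> real" where
  "C_s s = 4 powr s * s * Gamma (1/2 + s) / (sqrt pi * Gamma (1 - s))"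

definition c_s :: "real \<Rightarrow> real" where
  "c_s s = C_s s / (s * (1 - s))"

definition mu_s :: "real \<Rightarrow> real measure" where
  "mu_s s = density lborel (\<lambda>t. ennreal (if 0 < t then C_s s * t powr (-1 - 2 * s) else 0))"

definition L_phi :: "('a::real_normed_vector \<Rightarrow> real) \<Rightarrow> 'a \<Rightarrow> 'a \<Rightarrow> 'a \<Rightarrow> real" where
  "L_phi \<phi> x y y' = \<phi> (x + y) + \<phi> (x - y') - 2 * \<phi> x"

definition mat_opnorm :: "real^'n^'n \<Rightarrow> real" where
  "mat_opnorm A = onorm (\<lambda>v. A *v v)"

end

theory Submission
  imports Defs
begin

text \<open>On the ball, \<open>\<phi>\<close> agrees with its second-order Taylor polynomial at \<open>x\<close> up to
  \<open>\<omega> |y|\<^sup>2 / 2\<close>, where \<open>\<omega>\<close> bounds the oscillation of the Hessian on the ball.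
  For the quadratic model, the supremum over \<open>B\<^sub>\<epsilon>(x)\<close> is essentially attained at \<open>x + \<epsilon> e\<close> and the
  infimum at \<open>x - \<epsilon> e\<close>, with \<open>e = p\<^sub>x / |p\<^sub>x|\<close>: leaving the direction \<open>e\<close> loses more in the linear
  term than it gains in the quadratic one, up to \<open>\<epsilon>\<^sup>3 |\<nabla>\<^sup>2\<phi>(x)|\<^sup>2 / |p\<^sub>x|\<close>.
  Hence \<open>sup + inf - 2 \<phi>(x) \<approx> \<epsilon>\<^sup>2 \<langle>\<nabla>\<^sup>2\<phi>(x) e, e\<rangle>\<close>, and the integral has the same leading
  term because \<open>L\<^sub>\<phi>(x, t e, t e) \<approx> t\<^sup>2 \<langle>\<nabla>\<^sup>2\<phi>(x) e, e\<rangle>\<close> and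
  \<open>\<integral>\<^sub>0\<^sup>\<epsilon> t\<^sup>2 d\<mu>\<^sub>s = C\<^sub>s \<epsilon>\<^bsup>2-2s\<^esup> / (2 - 2s) = c\<^sub>s s \<epsilon>\<^bsup>2-2s\<^esup> / 2\<close>.\<close>

lemma mat_opnorm_mult_vec_le: "norm (A *v v) \<le> mat_opnorm A * norm v"
  unfolding mat_opnorm_def by (rule onorm) simp

lemma mat_opnorm_nonneg: "0 \<le> mat_opnorm A"
  unfolding mat_opnorm_def by (rule onorm_pos_le) simp

lemma mat_opnorm_le_card_norm: "mat_opnorm (A::real^'n^'n) \<le> real CARD('n) * real CARD('n) * norm A"
  unfolding mat_opnorm_def
proof (rule onorm_le_matrix_component)
  fix i j
  have "\<bar>A $ i $ j\<bar> \<le> norm (A $ i)" by (rule component_le_norm_cart)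
  also have "\<dots> \<le> norm A" by (rule Finite_Cartesian_Product.norm_nth_le)
  finally show "\<bar>A $ i $ j\<bar> \<le> norm A" .
qed

lemma bdd_above_mat_opnorm_diff:
  fixes H :: "real^'n \<Rightarrow> real^'n^'n"
  assumes "continuous_on (cball x \<eta>) H" "S \<subseteq> cball x \<eta>"
  shows "bdd_above ((\<lambda>y. mat_opnorm (H y - H x)) ` S)"
proof (cases "S = {}")
  case False
  then have "x \<in> cball x \<eta>" using assms(2) by auto
  obtain B where B: "\<And>z. z \<in> cball x \<eta> \<Longrightarrow> norm (H z) \<le> B"
    using compact_imp_bounded[OF compact_continuous_image[OF assms(1) compact_cball]]
    unfolding bounded_iff by (meson image_eqI)
  have "mat_opnorm (H y - H x) \<le> real CARD('n) * real CARD('n) * (B + B)" if "y \<in> S" for y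
  proof -
    have "norm (H y - H x) \<le> B + B"
      using B[of y] B[OF \<open>x \<in> cball x \<eta>\<close>] that assms(2) norm_triangle_ineq4[of "H y" "H x"]
      by auto
    then show ?thesis
      using mat_opnorm_le_card_norm[of "H y - H x"]
      by (meson mult_left_mono of_nat_0_le_iff mult_nonneg_nonneg order_trans)
  qed
  then show ?thesis by (rule bdd_aboveI2)
qed simp

lemma has_derivative_along_line:
  fixes F :: "'a::real_normed_vector \<Rightarrow> 'b::real_normed_vector"
  assumes "(F has_derivative L) (at (x + t *\<^sub>R y))"
  shows "((\<lambda>t. F (x + t *\<^sub>R y)) has_derivative (\<lambda>h. L (h *\<^sub>R y))) (at t)"
proof -
  have "((\<lambda>t. x + t *\<^sub>R y) has_derivative (\<lambda>h. h *\<^sub>R y)) (at t)"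
    by (auto intro!: derivative_eq_intros)
  from has_derivative_compose[OF this assms] show ?thesis by (simp add: o_def)
qed

lemma second_order_mean_value:
  fixes \<phi> :: "real^'n \<Rightarrow> real" and g :: "real^'n \<Rightarrow> real^'n" and H :: "real^'n \<Rightarrow> real^'n^'n"
  assumes grad: "\<And>y. y \<in> cball x \<eta> \<Longrightarrow> (\<phi> has_derivative (\<lambda>h. g y \<bullet> h)) (at y within cball x \<eta>)"
    and hess: "\<And>y. y \<in> cball x \<eta> \<Longrightarrow> (g has_derivative (\<lambda>h. H y *v h)) (at y within cball x \<eta>)"
    and y: "norm y < \<eta>"
  obtains \<tau> where "0 < \<tau>" "\<tau> < 1" "\<phi> (x + y) = \<phi> x + g x \<bullet> y + (H (x + \<tau> *\<^sub>R y) *v y) \<bullet> y / 2"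
proof -
  define D :: "nat \<Rightarrow> real \<Rightarrow> real" where
    "D = (\<lambda>m t. if m = 0 then \<phi> (x + t *\<^sub>R y) else if m = 1 then g (x + t *\<^sub>R y) \<bullet> y
            else (H (x + t *\<^sub>R y) *v y) \<bullet> y)"
  have at_segment: "at (x + t *\<^sub>R y) within cball x \<eta> = at (x + t *\<^sub>R y)" "x + t *\<^sub>R y \<in> cball x \<eta>"
    if "0 \<le> t" "t \<le> 1" for t
  proof -
    have "norm (t *\<^sub>R y) \<le> norm y" using that by (simp add: mult_left_le_one_le)
    then have "norm (t *\<^sub>R y) < \<eta>" using y by linarith
    then have "x + t *\<^sub>R y \<in> ball x \<eta>" by (simp add: dist_norm)
    then show "at (x + t *\<^sub>R y) within cball x \<eta> = at (x + t *\<^sub>R y)"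
      by (intro at_within_interior) simp
    from \<open>x + t *\<^sub>R y \<in> ball x \<eta>\<close> show "x + t *\<^sub>R y \<in> cball x \<eta>" by simp
  qed
  have der: "DERIV (D m) t :> D (Suc m) t" if "m < 2" "0 \<le> t" "t \<le> 1" for m t
  proof -
    consider "m = 0" | "m = 1" using \<open>m < 2\<close> by fastforce
    then show ?thesis
    proof cases
      case 1
      have "(\<phi> has_derivative (\<lambda>h. g (x + t *\<^sub>R y) \<bullet> h)) (at (x + t *\<^sub>R y))"
        using grad[OF at_segment(2)[OF that(2,3)]] at_segment(1)[OF that(2,3)] by simp
      from has_derivative_along_line[OF this]
      have "((\<lambda>t. \<phi> (x + t *\<^sub>R y)) has_derivative (\<lambda>h. g (x + t *\<^sub>R y) \<bullet> (h *\<^sub>R y))) (at t)" .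
      then show ?thesis
        unfolding has_field_derivative_def D_def using 1
        by (auto elim!: has_derivative_eq_rhs simp: fun_eq_iff)
    next
      case 2
      have "(g has_derivative (\<lambda>h. H (x + t *\<^sub>R y) *v h)) (at (x + t *\<^sub>R y))"
        using hess[OF at_segment(2)[OF that(2,3)]] at_segment(1)[OF that(2,3)] by simp
      from has_derivative_along_line[OF this]
      have "((\<lambda>t. g (x + t *\<^sub>R y)) has_derivative (\<lambda>h. H (x + t *\<^sub>R y) *v (h *\<^sub>R y))) (at t)" .
      then have "((\<lambda>t. g (x + t *\<^sub>R y) \<bullet> y) has_derivative (\<lambda>h. (H (x + t *\<^sub>R y) *v (h *\<^sub>R y)) \<bullet> y)) (at t)"
        by (rule has_derivative_inner_left)
      then show ?thesis
        unfolding has_field_derivative_def D_def using 2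
        by (auto elim!: has_derivative_eq_rhs simp: fun_eq_iff matrix_vector_mult_scaleR)
    qed
  qed
  have "\<exists>\<tau>. (if (1::real) < 0 then 1 < \<tau> \<and> \<tau> < 0 else 0 < \<tau> \<and> \<tau> < 1) \<and>
      D 0 1 = (\<Sum>m<2. D m 0 / fact m * (1 - 0) ^ m) + D 2 \<tau> / fact 2 * (1 - 0) ^ 2"
    by (rule Taylor[of 2 D "D 0" 0 1]) (use der in auto)
  then obtain \<tau> where "0 < \<tau>" "\<tau> < 1"
    and taylor: "D 0 1 = (\<Sum>m<2. D m 0 / fact m * (1 - 0) ^ m) + D 2 \<tau> / fact 2 * (1 - 0) ^ 2"
    by auto
  from taylor have "\<phi> (x + y) = \<phi> x + g x \<bullet> y + (H (x + \<tau> *\<^sub>R y) *v y) \<bullet> y / 2"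
    by (simp add: D_def numeral_2_eq_2)
  with \<open>0 < \<tau>\<close> \<open>\<tau> < 1\<close> show ?thesis by (rule that)
qed

lemma second_order_remainder_le:
  fixes \<phi> :: "real^'n \<Rightarrow> real" and g :: "real^'n \<Rightarrow> real^'n" and H :: "real^'n \<Rightarrow> real^'n^'n"
  assumes grad: "\<And>y. y \<in> cball x \<eta> \<Longrightarrow> (\<phi> has_derivative (\<lambda>h. g y \<bullet> h)) (at y within cball x \<eta>)"
    and hess: "\<And>y. y \<in> cball x \<eta> \<Longrightarrow> (g has_derivative (\<lambda>h. H y *v h)) (at y within cball x \<eta>)"
    and "\<epsilon> < \<eta>" and \<omega>: "\<And>z. z \<in> ball x \<epsilon> \<Longrightarrow> mat_opnorm (H z - H x) \<le> \<omega>"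
    and y: "norm y \<le> \<epsilon>"
  shows "\<bar>\<phi> (x + y) - \<phi> x - g x \<bullet> y - (H x *v y) \<bullet> y / 2\<bar> \<le> \<omega> / 2 * (norm y)\<^sup>2"
proof (cases "y = 0")
  case False
  have "norm y < \<eta>" using y \<open>\<epsilon> < \<eta>\<close> by simp
  then obtain \<tau> where \<tau>: "0 < \<tau>" "\<tau> < 1" "\<phi> (x + y) = \<phi> x + g x \<bullet> y + (H (x + \<tau> *\<^sub>R y) *v y) \<bullet> y / 2"
    using second_order_mean_value[OF grad hess] by blast
  have "norm (\<tau> *\<^sub>R y) < norm y" using \<tau> False by simp
  then have "x + \<tau> *\<^sub>R y \<in> ball x \<epsilon>" using y by (simp add: dist_norm)
  have "\<bar>\<phi> (x + y) - \<phi> x - g x \<bullet> y - (H x *v y) \<bullet> y / 2\<bar> = \<bar>((H (x + \<tau> *\<^sub>R y) - H x) *v y) \<bullet> y\<bar> / 2"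
    using \<tau>(3) by (simp add: matrix_vector_mult_diff_rdistrib inner_diff_left flip: diff_divide_distrib)
  also have "\<dots> \<le> norm ((H (x + \<tau> *\<^sub>R y) - H x) *v y) * norm y / 2"
    by (simp add: Cauchy_Schwarz_ineq2 divide_right_mono)
  also have "\<dots> \<le> \<omega> * norm y * norm y / 2"
  proof -
    have "norm ((H (x + \<tau> *\<^sub>R y) - H x) *v y) \<le> mat_opnorm (H (x + \<tau> *\<^sub>R y) - H x) * norm y"
      by (rule mat_opnorm_mult_vec_le)
    also have "\<dots> \<le> \<omega> * norm y"
      by (rule mult_right_mono[OF \<omega>[OF \<open>x + \<tau> *\<^sub>R y \<in> ball x \<epsilon>\<close>]]) simp
    finally show ?thesis by (simp add: divide_right_mono mult_right_mono)
  qed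
  finally show ?thesis by (simp add: power2_eq_square)
qed simp

text \<open>Compare \<open>y\<close> with the boundary point \<open>z = \<epsilon> sgn w\<close>: the quadratic parts differ by
  \<open>A (y - z) \<bullet> y + A z \<bullet> (y - z) \<le> 2 M \<epsilon> |y - z|\<close>, while \<open>|y - z|\<^sup>2 \<le> 2 \<epsilon> (\<epsilon> - sgn w \<bullet> y)\<close>,
  so AM-GM absorbs this cross term into the linear gain \<open>|w| (\<epsilon> - sgn w \<bullet> y)\<close>.\<close>
lemma inner_plus_quadratic_form_le:
  fixes w y :: "'a::real_inner" and A :: "'a \<Rightarrow> 'a"
  assumes A: "linear A" "\<And>v. norm (A v) \<le> M * norm v"
    and w: "w \<noteq> 0" and y: "norm y \<le> \<epsilon>" and e: "0 < \<epsilon>"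
  shows "w \<bullet> y + A y \<bullet> y / 2 \<le> \<epsilon> * norm w + \<epsilon>\<^sup>2 * (A (sgn w) \<bullet> sgn w) / 2 + \<epsilon> ^ 3 * M\<^sup>2 / (2 * norm w)"
proof -
  define u where "u = sgn w"
  define z where "z = \<epsilon> *\<^sub>R u"
  define d where "d = norm (y - z)"
  define \<delta> where "\<delta> = \<epsilon> - u \<bullet> y"
  have nw: "0 < norm w" using w by simp
  have nu: "norm u = 1" using w by (simp add: u_def norm_sgn)
  have M0: "0 \<le> M" using A(2)[of u] nu by (metis mult.right_neutral norm_ge_zero order_trans)
  have "d\<^sup>2 = (y - z) \<bullet> (y - z)" unfolding d_def by (rule power2_norm_eq_inner)
  also have "\<dots> = y \<bullet> y - 2 * (z \<bullet> y) + z \<bullet> z"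
    by (simp add: inner_diff_left inner_diff_right inner_commute)
  also have "\<dots> = y \<bullet> y - 2 * \<epsilon> * (u \<bullet> y) + \<epsilon>\<^sup>2"
    using nu by (simp add: z_def norm_eq_1 power2_eq_square)
  finally have "d\<^sup>2 = y \<bullet> y - 2 * \<epsilon> * (u \<bullet> y) + \<epsilon>\<^sup>2" .
  moreover have "y \<bullet> y \<le> \<epsilon>\<^sup>2"
    using y by (metis norm_ge_zero power2_norm_eq_inner power_mono)
  ultimately have d_sq: "d\<^sup>2 \<le> 2 * \<epsilon> * \<delta>" unfolding \<delta>_def by (simp add: algebra_simps power2_eq_square)
  have cross: "A y \<bullet> y - A z \<bullet> z = A (y - z) \<bullet> y + A z \<bullet> (y - z)"
    using linear_diff[OF A(1)] by (simp add: inner_diff_left inner_diff_right inner_commute)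
  have "\<bar>A (y - z) \<bullet> y\<bar> \<le> M * d * \<epsilon>"
  proof -
    have "\<bar>A (y - z) \<bullet> y\<bar> \<le> norm (A (y - z)) * norm y" by (rule Cauchy_Schwarz_ineq2)
    also have "\<dots> \<le> (M * d) * \<epsilon>"
      using A(2)[of "y - z"] y M0 by (intro mult_mono) (auto simp: d_def)
    finally show ?thesis .
  qed
  moreover have "\<bar>A z \<bullet> (y - z)\<bar> \<le> M * d * \<epsilon>"
  proof -
    have "\<bar>A z \<bullet> (y - z)\<bar> \<le> norm (A z) * norm (y - z)" by (rule Cauchy_Schwarz_ineq2)
    also have "\<dots> \<le> (M * \<epsilon>) * d"
      using A(2)[of z] nu e M0 by (intro mult_mono) (auto simp: d_def z_def)
    finally show ?thesis by (simp add: mult_ac)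
  qed
  ultimately have quad: "A y \<bullet> y / 2 \<le> A z \<bullet> z / 2 + \<epsilon> * M * d"
    using cross by (simp add: abs_le_iff algebra_simps)
  have amgm: "\<epsilon> * M * d \<le> norm w * \<delta> + \<epsilon> ^ 3 * M\<^sup>2 / (2 * norm w)"
  proof -
    have "2 * norm w * \<epsilon> * (\<epsilon> * M * d) \<le> d\<^sup>2 * (norm w)\<^sup>2 + \<epsilon> ^ 4 * M\<^sup>2"
      using sum_squares_ge_zero[of 0 "d * norm w - \<epsilon>\<^sup>2 * M"]
      by (simp add: power2_eq_square algebra_simps power4_eq_xxxx)
    also have "\<dots> \<le> 2 * \<epsilon> * \<delta> * (norm w)\<^sup>2 + \<epsilon> ^ 4 * M\<^sup>2"
      using d_sq by (simp add: mult_right_mono)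
    also have "\<dots> = 2 * norm w * \<epsilon> * (norm w * \<delta> + \<epsilon> ^ 3 * M\<^sup>2 / (2 * norm w))"
      using nw by (simp add: field_simps power2_eq_square power4_eq_xxxx power3_eq_cube)
    finally show ?thesis using nw e by (simp add: mult_le_cancel_left_pos)
  qed
  have "w \<bullet> y = norm w * (u \<bullet> y)" using nw by (simp add: u_def sgn_div_norm)
  moreover have "A z \<bullet> z = \<epsilon>\<^sup>2 * (A u \<bullet> u)"
    using linear_scale[OF A(1)] by (simp add: z_def power2_eq_square)
  ultimately show ?thesis
    using quad amgm unfolding u_def[symmetric] \<delta>_def by (simp add: algebra_simps)
qed

lemma isCont_le_from_left:
  fixes h :: "real \<Rightarrow> real"
  assumes "isCont h b" "a < b" "\<And>t. a < t \<Longrightarrow> t < b \<Longrightarrow> h t \<le> S"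
  shows "h b \<le> S"
proof (rule tendsto_upperbound)
  show "(h \<longlongrightarrow> h b) (at_left b)"
    using assms(1) unfolding isCont_def by (rule tendsto_within_subset) auto
  show "\<forall>\<^sub>F t in at_left b. h t \<le> S"
    using eventually_at_left_real[OF assms(2)] by eventually_elim (use assms(3) in auto)
qed (rule trivial_limit_at_left_real)

lemma Sup_ball_second_order_model:
  fixes \<phi> :: "'a::real_inner \<Rightarrow> real" and A :: "'a \<Rightarrow> 'a"
  assumes A: "linear A" "\<And>v. norm (A v) \<le> M * norm v"
    and p: "p \<noteq> 0" and e: "0 < \<epsilon>" and \<omega>: "0 \<le> \<omega>"
    and rem: "\<And>y. norm y \<le> \<epsilon> \<Longrightarrow> \<bar>\<phi> (x + y) - \<phi> x - p \<bullet> y - A y \<bullet> y / 2\<bar> \<le> \<omega> / 2 * (norm y)\<^sup>2"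
  shows "\<bar>Sup (\<phi> ` ball x \<epsilon>) - (\<phi> x + \<epsilon> * norm p + \<epsilon>\<^sup>2 * (A (sgn p) \<bullet> sgn p) / 2)\<bar>
    \<le> \<epsilon> ^ 3 * M\<^sup>2 / (2 * norm p) + \<omega> / 2 * \<epsilon>\<^sup>2"
proof -
  define u where "u = sgn p"
  define a where "a = A u \<bullet> u"
  define upper where "upper = \<phi> x + \<epsilon> * norm p + \<epsilon>\<^sup>2 * a / 2 + \<epsilon> ^ 3 * M\<^sup>2 / (2 * norm p) + \<omega> / 2 * \<epsilon>\<^sup>2"
  define lower where "lower = (\<lambda>t. \<phi> x + t * norm p + t\<^sup>2 * a / 2 - \<omega> / 2 * t\<^sup>2)"
  have nu: "norm u = 1" using p by (simp add: u_def norm_sgn)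
  have bound: "\<phi> z \<le> upper" if "z \<in> ball x \<epsilon>" for z
  proof -
    define y where "y = z - x"
    have y: "norm y \<le> \<epsilon>" using that by (simp add: y_def dist_norm norm_minus_commute)
    have "\<omega> / 2 * (norm y)\<^sup>2 \<le> \<omega> / 2 * \<epsilon>\<^sup>2" using \<omega> y by (intro mult_left_mono power_mono) auto
    then show ?thesis
      using rem[OF y] inner_plus_quadratic_form_le[OF A p y e]
      unfolding upper_def a_def u_def y_def abs_le_iff by simp
  qed
  then have "Sup (\<phi> ` ball x \<epsilon>) \<le> upper"
    using e by (intro cSup_least) auto
  \<comment> \<open>The ball is open, so \<open>x + \<epsilon> u\<close> is only reached in the limit along the segment.\<close>
  moreover have "lower \<epsilon> \<le> Sup (\<phi> ` ball x \<epsilon>)"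
  proof (rule isCont_le_from_left[OF _ e])
    show "isCont lower \<epsilon>" unfolding lower_def by (intro continuous_intros) simp
    fix t assume t: "0 < t" "t < \<epsilon>"
    then have "norm (t *\<^sub>R u) \<le> \<epsilon>" "x + t *\<^sub>R u \<in> ball x \<epsilon>"
      using nu by (simp_all add: dist_norm)
    have lin: "p \<bullet> (t *\<^sub>R u) = t * norm p"
      using p by (simp add: u_def sgn_div_norm dot_square_norm power2_eq_square)
    have quad: "A (t *\<^sub>R u) \<bullet> (t *\<^sub>R u) = t\<^sup>2 * a"
      by (simp add: a_def linear_scale[OF A(1)] power2_eq_square)
    have "norm (t *\<^sub>R u) = t" using nu t by simp
    then have "lower t \<le> \<phi> (x + t *\<^sub>R u)"
      using rem[OF \<open>norm (t *\<^sub>R u) \<le> \<epsilon>\<close>] unfolding lin quad lower_def abs_le_iff by simp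
    also have "\<dots> \<le> Sup (\<phi> ` ball x \<epsilon>)"
      using \<open>x + t *\<^sub>R u \<in> ball x \<epsilon>\<close> bound by (intro cSup_upper bdd_aboveI2) auto
    finally show "lower t \<le> Sup (\<phi> ` ball x \<epsilon>)" .
  qed
  moreover have "0 \<le> \<epsilon> ^ 3 * M\<^sup>2 / (2 * norm p)" using e by simp
  ultimately show ?thesis
    unfolding upper_def lower_def a_def u_def abs_le_iff by linarith
qed

lemma Inf_ball_second_order_model:
  fixes \<phi> :: "'a::real_inner \<Rightarrow> real" and A :: "'a \<Rightarrow> 'a"
  assumes A: "linear A" "\<And>v. norm (A v) \<le> M * norm v"
    and p: "p \<noteq> 0" and e: "0 < \<epsilon>" and \<omega>: "0 \<le> \<omega>"
    and rem: "\<And>y. norm y \<le> \<epsilon> \<Longrightarrow> \<bar>\<phi> (x + y) - \<phi> x - p \<bullet> y - A y \<bullet> y / 2\<bar> \<le> \<omega> / 2 * (norm y)\<^sup>2"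
  shows "\<bar>Inf (\<phi> ` ball x \<epsilon>) - (\<phi> x - \<epsilon> * norm p + \<epsilon>\<^sup>2 * (A (sgn p) \<bullet> sgn p) / 2)\<bar>
    \<le> \<epsilon> ^ 3 * M\<^sup>2 / (2 * norm p) + \<omega> / 2 * \<epsilon>\<^sup>2"
proof -
  have "linear (\<lambda>v. - A v)" using A(1) by (simp add: linear_compose_neg)
  moreover have "\<And>v. norm (- A v) \<le> M * norm v" using A(2) by simp
  moreover have "\<bar>- \<phi> (x + y) - - \<phi> x - (- p) \<bullet> y - - A y \<bullet> y / 2\<bar> \<le> \<omega> / 2 * (norm y)\<^sup>2"
    if "norm y \<le> \<epsilon>" for y
    using rem[OF that] unfolding inner_minus_left abs_le_iff by linarith
  ultimately have "\<bar>Sup ((\<lambda>z. - \<phi> z) ` ball x \<epsilon>) - (- \<phi> x + \<epsilon> * norm (- p) + \<epsilon>\<^sup>2 * (- A (sgn (- p)) \<bullet> sgn (- p)) / 2)\<bar>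
    \<le> \<epsilon> ^ 3 * M\<^sup>2 / (2 * norm (- p)) + \<omega> / 2 * \<epsilon>\<^sup>2"
    using p e \<omega> by (intro Sup_ball_second_order_model) auto
  moreover have "Inf (\<phi> ` ball x \<epsilon>) = - Sup ((\<lambda>z. - \<phi> z) ` ball x \<epsilon>)"
    by (simp add: Inf_real_def image_image)
  ultimately show ?thesis
    by (simp add: sgn_minus linear_neg[OF A(1)] abs_minus_commute algebra_simps)
qed

lemma Sup_plus_Inf_ball_second_order_model:
  fixes \<phi> :: "'a::real_inner \<Rightarrow> real" and A :: "'a \<Rightarrow> 'a"
  assumes A: "linear A" "\<And>v. norm (A v) \<le> M * norm v"
    and p: "p \<noteq> 0" and e: "0 < \<epsilon>" and \<omega>: "0 \<le> \<omega>"
    and rem: "\<And>y. norm y \<le> \<epsilon> \<Longrightarrow> \<bar>\<phi> (x + y) - \<phi> x - p \<bullet> y - A y \<bullet> y / 2\<bar> \<le> \<omega> / 2 * (norm y)\<^sup>2"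
  shows "\<bar>Sup (\<phi> ` ball x \<epsilon>) + Inf (\<phi> ` ball x \<epsilon>) - 2 * \<phi> x - \<epsilon>\<^sup>2 * (A (sgn p) \<bullet> sgn p)\<bar>
    \<le> \<epsilon> ^ 3 * M\<^sup>2 / norm p + \<omega> * \<epsilon>\<^sup>2"
  using Sup_ball_second_order_model[OF assms] Inf_ball_second_order_model[OF assms]
  by (simp add: abs_le_iff)

lemma abs_set_integral_diff_mult_le:
  fixes f w :: "'a \<Rightarrow> real"
  assumes w: "set_integrable M S w" and f: "set_borel_measurable M S f"
    and bound: "\<And>t. t \<in> S \<Longrightarrow> \<bar>f t - a * w t\<bar> \<le> \<omega> * w t"
  shows "\<bar>(LINT t:S|M. f t) - a * (LINT t:S|M. w t)\<bar> \<le> \<omega> * (LINT t:S|M. w t)"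
proof -
  have "set_integrable M S f"
  proof (rule set_integrable_bound[OF _ f])
    show "set_integrable M S (\<lambda>t. (\<bar>a\<bar> + \<bar>\<omega>\<bar>) * w t)" using w by simp
    have "\<bar>f t\<bar> \<le> (\<bar>a\<bar> + \<bar>\<omega>\<bar>) * \<bar>w t\<bar>" if "t \<in> S" for t
      using bound[OF that] abs_triangle_ineq2[of "f t" "a * w t"] abs_ge_self[of "\<omega> * w t"]
      by (simp add: abs_mult distrib_right)
    then show "AE t in M. t \<in> S \<longrightarrow> norm (f t) \<le> norm ((\<bar>a\<bar> + \<bar>\<omega>\<bar>) * w t)"
      by (simp add: abs_mult)
  qed
  then have diff: "(LINT t:S|M. f t) - a * (LINT t:S|M. w t) = (LINT t:S|M. f t - a * w t)"
    using w by simp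
  have pointwise: "f t - a * w t \<le> \<omega> * w t" "(- \<omega>) * w t \<le> f t - a * w t" if "t \<in> S" for t
    using bound[OF that] by (simp_all add: abs_le_iff)
  have "(LINT t:S|M. f t - a * w t) \<le> (LINT t:S|M. \<omega> * w t)"
    by (rule set_integral_mono) (use \<open>set_integrable M S f\<close> w pointwise in auto)
  moreover have "(LINT t:S|M. (- \<omega>) * w t) \<le> (LINT t:S|M. f t - a * w t)"
    by (rule set_integral_mono) (use \<open>set_integrable M S f\<close> w pointwise
        set_integrable_mult_right[OF w, of "- \<omega>"] in auto)
  ultimately show ?thesis
    unfolding diff abs_le_iff set_integral_mult_right by linarith
qed

lemma C_s_pos: "0 < s \<Longrightarrow> s < 1 \<Longrightarrow> 0 < C_s s"
  unfolding C_s_def by (intro divide_pos_pos mult_pos_pos) auto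

lemma sets_mu_s [measurable_cong]: "sets (mu_s s) = sets borel"
  by (simp add: mu_s_def)

lemma mu_s_second_moment:
  assumes s: "0 < s" "s < 1" and e: "0 \<le> \<epsilon>"
  shows "set_integrable (mu_s s) {0<..\<epsilon>} (\<lambda>t. t\<^sup>2)"
    and "(LINT t:{0<..\<epsilon>}|mu_s s. t\<^sup>2) = C_s s * \<epsilon> powr (2 - 2 * s) / (2 - 2 * s)"
proof -
  define K where "K = C_s s * \<epsilon> powr (2 - 2 * s) / (2 - 2 * s)"
  define dens where "dens = (\<lambda>t::real. if 0 < t then C_s s * t powr (-1 - 2 * s) else 0)"
  have C: "0 < C_s s" using s by (rule C_s_pos)
  have "((\<lambda>t. C_s s * t powr (1 - 2 * s)) has_integral K) {0..\<epsilon>}"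
    using has_integral_mult_right[OF has_integral_powr_from_0[of "1 - 2 * s" \<epsilon>]] s e
    by (simp add: K_def)
  then have "(\<integral>\<^sup>+t. ennreal (indicator {0..\<epsilon>} t * (C_s s * t powr (1 - 2 * s))) \<partial>lborel) = ennreal K"
    by (rule nn_integral_has_integral_lebesgue[rotated]) (use C in simp)
  moreover have "(\<lambda>t. indicator {0..\<epsilon>} t * (C_s s * t powr (1 - 2 * s))) \<in> borel_measurable lborel"
    by measurable
  ultimately have "has_bochner_integral lborel (\<lambda>t. indicator {0..\<epsilon>} t * (C_s s * t powr (1 - 2 * s))) K"
    using C s e by (intro has_bochner_integral_nn_integral) (simp_all add: K_def)
  moreover have "indicator {0..\<epsilon>} t * (C_s s * t powr (1 - 2 * s)) = dens t *\<^sub>R (indicator {0<..\<epsilon>} t *\<^sub>R t\<^sup>2)"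
    for t :: real
  proof (cases "0 < t")
    case True
    have "t powr (-1 - 2 * s) * t\<^sup>2 = t powr (-1 - 2 * s) * t powr 2"
      using True by (simp add: powr_numeral)
    also have "\<dots> = t powr (1 - 2 * s)"
      by (simp flip: powr_add)
    finally show ?thesis using True by (simp add: dens_def indicator_def)
  qed (auto simp: dens_def indicator_def)
  ultimately have "has_bochner_integral lborel (\<lambda>t. dens t *\<^sub>R (indicator {0<..\<epsilon>} t *\<^sub>R t\<^sup>2)) K"
    by (simp only:)
  moreover have "dens \<in> borel_measurable lborel"
    unfolding dens_def by measurable
  moreover have "(\<lambda>t. indicator {0<..\<epsilon>} t *\<^sub>R t\<^sup>2 :: real) \<in> borel_measurable lborel"
    by measurable
  moreover have "AE t in lborel. 0 \<le> dens t"
    using C by (simp add: dens_def)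
  ultimately have "has_bochner_integral (density lborel (\<lambda>t. ennreal (dens t))) (\<lambda>t. indicator {0<..\<epsilon>} t *\<^sub>R t\<^sup>2) K"
    by (intro has_bochner_integral_density)
  moreover have "density lborel (\<lambda>t. ennreal (dens t)) = mu_s s"
    by (simp add: mu_s_def dens_def)
  ultimately have "has_bochner_integral (mu_s s) (\<lambda>t. indicator {0<..\<epsilon>} t *\<^sub>R t\<^sup>2) K"
    by simp
  then show "set_integrable (mu_s s) {0<..\<epsilon>} (\<lambda>t. t\<^sup>2)"
    and "(LINT t:{0<..\<epsilon>}|mu_s s. t\<^sup>2) = K"
    by (auto simp: set_integrable_def set_lebesgue_integral_def has_bochner_integral_iff)
qed

lemma abs_set_integral_L_phi_mu_s_le:
  fixes \<phi> :: "'a::real_inner \<Rightarrow> real" and A :: "'a \<Rightarrow> 'a"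
  assumes s: "0 < s" "s < 1" and e: "0 \<le> \<epsilon>" and A: "linear A" and u: "norm u = 1"
    and cont: "continuous_on (cball x \<epsilon>) \<phi>"
    and rem: "\<And>y. norm y \<le> \<epsilon> \<Longrightarrow> \<bar>\<phi> (x + y) - \<phi> x - p \<bullet> y - A y \<bullet> y / 2\<bar> \<le> \<omega> / 2 * (norm y)\<^sup>2"
  shows "\<bar>(LINT t:{0<..\<epsilon>}|mu_s s. L_phi \<phi> x (t *\<^sub>R u) (t *\<^sub>R u))
      - (A u \<bullet> u) * (C_s s * \<epsilon> powr (2 - 2 * s) / (2 - 2 * s))\<bar>
    \<le> \<omega> * (C_s s * \<epsilon> powr (2 - 2 * s) / (2 - 2 * s))"
proof -
  define L where "L = (\<lambda>t. L_phi \<phi> x (t *\<^sub>R u) (t *\<^sub>R u))"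
  have "continuous_on {0<..\<epsilon>} (\<lambda>t. \<phi> (x + t *\<^sub>R u))" "continuous_on {0<..\<epsilon>} (\<lambda>t. \<phi> (x - t *\<^sub>R u))"
    using u by (auto intro!: continuous_on_compose2[OF cont] continuous_intros simp: dist_norm)
  then have "continuous_on {0<..\<epsilon>} L"
    unfolding L_def L_phi_def by (intro continuous_intros)
  then have "set_borel_measurable borel {0<..\<epsilon>} L"
    by (intro set_measurable_continuous_on) auto
  then have meas: "set_borel_measurable (mu_s s) {0<..\<epsilon>} L"
    unfolding set_borel_measurable_def by (simp add: measurable_cong_sets[OF sets_mu_s refl])
  have "\<bar>L t - (A u \<bullet> u) * t\<^sup>2\<bar> \<le> \<omega> * t\<^sup>2" if t: "t \<in> {0<..\<epsilon>}" for t
  proof -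
    have "norm (t *\<^sub>R u) \<le> \<epsilon>" "norm (- (t *\<^sub>R u)) \<le> \<epsilon>"
      using t u by simp_all
    moreover have "A (t *\<^sub>R u) \<bullet> (t *\<^sub>R u) = t\<^sup>2 * (A u \<bullet> u)"
      and "A (- (t *\<^sub>R u)) \<bullet> (- (t *\<^sub>R u)) = t\<^sup>2 * (A u \<bullet> u)"
      by (simp_all add: linear_neg[OF A] linear_scale[OF A] power2_eq_square)
    ultimately show ?thesis
      using rem[of "t *\<^sub>R u"] rem[of "- (t *\<^sub>R u)"] u
      unfolding L_def L_phi_def abs_le_iff inner_minus_right by (simp add: algebra_simps)
  qed
  then show ?thesis
    using abs_set_integral_diff_mult_le[OF mu_s_second_moment(1)[OF s e] meas]
      mu_s_second_moment(2)[OF s e]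
    unfolding L_def by simp
qed

lemma c_s_scaled_error_le:
  fixes D J a M \<omega> n \<epsilon> :: real
  assumes s: "0 < s" "s < 1" and e: "0 < \<epsilon>" and n: "0 < n"
    and D: "\<bar>D - \<epsilon>\<^sup>2 * a\<bar> \<le> \<epsilon> ^ 3 * M\<^sup>2 / n + \<omega> * \<epsilon>\<^sup>2"
    and J: "\<bar>J - a * (C_s s * \<epsilon> powr (2 - 2 * s) / (2 - 2 * s))\<bar> \<le> \<omega> * (C_s s * \<epsilon> powr (2 - 2 * s) / (2 - 2 * s))"
  shows "\<bar>c_s s * s * \<epsilon> powr (-2 * s) * (1/2) * D - J\<bar>
    \<le> c_s s * s * (2 * \<epsilon> powr (3 - 2 * s) * M\<^sup>2 / n + \<epsilon> powr (2 - 2 * s) * \<omega>)"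
proof -
  define k where "k = c_s s * s * \<epsilon> powr (-2 * s)"
  have k: "0 < k" using s e C_s_pos[OF s] by (simp add: k_def c_s_def)
  have "\<epsilon> powr (r - 2 * s) = \<epsilon> powr (-2 * s) * \<epsilon> powr r" for r
    by (simp flip: powr_add)
  then have pw: "\<epsilon> powr (2 - 2 * s) = \<epsilon> powr (-2 * s) * \<epsilon>\<^sup>2" "\<epsilon> powr (3 - 2 * s) = \<epsilon> powr (-2 * s) * \<epsilon> ^ 3"
    using e by (simp_all add: powr_numeral)
  have K: "C_s s * \<epsilon> powr (2 - 2 * s) / (2 - 2 * s) = k * \<epsilon>\<^sup>2 / 2"
    using s unfolding pw by (simp add: k_def c_s_def field_simps)
  have rhs: "c_s s * s * (2 * \<epsilon> powr (3 - 2 * s) * M\<^sup>2 / n + \<epsilon> powr (2 - 2 * s) * \<omega>)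
      = 2 * (k * \<epsilon> ^ 3 * M\<^sup>2 / n) + k * \<epsilon>\<^sup>2 * \<omega>"
    unfolding pw by (simp add: k_def algebra_simps)
  have "\<bar>k * (1/2) * D - J\<bar> = \<bar>k / 2 * (D - \<epsilon>\<^sup>2 * a) + (a * (k * \<epsilon>\<^sup>2 / 2) - J)\<bar>"
    by (simp add: algebra_simps)
  also have "\<dots> \<le> \<bar>k / 2 * (D - \<epsilon>\<^sup>2 * a)\<bar> + \<bar>a * (k * \<epsilon>\<^sup>2 / 2) - J\<bar>"
    by (rule abs_triangle_ineq)
  also have "\<dots> = k / 2 * \<bar>D - \<epsilon>\<^sup>2 * a\<bar> + \<bar>J - a * (k * \<epsilon>\<^sup>2 / 2)\<bar>"
    using k by (simp add: abs_mult abs_minus_commute)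
  also have "\<dots> \<le> k / 2 * (\<epsilon> ^ 3 * M\<^sup>2 / n + \<omega> * \<epsilon>\<^sup>2) + \<omega> * (k * \<epsilon>\<^sup>2 / 2)"
    using D J k unfolding K by (intro add_mono mult_left_mono) auto
  also have "\<dots> \<le> 2 * (k * \<epsilon> ^ 3 * M\<^sup>2 / n) + k * \<epsilon>\<^sup>2 * \<omega>"
    using k e n by (simp add: field_simps)
  finally show ?thesis unfolding rhs k_def .
qed

theorem proposition4p1:
  fixes s :: real and x :: "real^'n" and \<eta> :: real
    and \<phi> :: "real^'n \<Rightarrow> real" and g :: "real^'n \<Rightarrow> real^'n" and H :: "real^'n \<Rightarrow> real^'n^'n"
  assumes s_range: "1/2 < s" "s < 1"
    and eta_pos: "\<eta> > 0"
    and grad: "\<And>y. y \<in> cball x \<eta> \<Longrightarrow> (\<phi> has_derivative (\<lambda>h. g y \<bullet> h)) (at y within cball x \<eta>)"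
    and hess: "\<And>y. y \<in> cball x \<eta> \<Longrightarrow> (g has_derivative (\<lambda>h. H y *v h)) (at y within cball x \<eta>)"
    and hess_cont: "continuous_on (cball x \<eta>) H"
    and px_nz: "g x \<noteq> 0"
  shows "\<forall>\<epsilon>. 0 < \<epsilon> \<and> \<epsilon> < \<eta> \<and> \<epsilon> * mat_opnorm (H x) \<le> norm (g x) \<longrightarrow>
    \<bar>c_s s * s * \<epsilon> powr (-2 * s) * (1/2) *
        (Sup (\<phi> ` ball x \<epsilon>) + Inf (\<phi> ` ball x \<epsilon>) - 2 * \<phi> x)
      - (LINT t:{0<..\<epsilon>}|mu_s s.
           L_phi \<phi> x (t *\<^sub>R (g x /\<^sub>R norm (g x))) (t *\<^sub>R (g x /\<^sub>R norm (g x))))\<bar>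
    \<le> c_s s * s * (2 * \<epsilon> powr (3 - 2 * s) * (mat_opnorm (H x))\<^sup>2 / norm (g x)
         + \<epsilon> powr (2 - 2 * s) * Sup ((\<lambda>y. mat_opnorm (H y - H x)) ` ball x \<epsilon>))"
proof (intro allI impI, goal_cases)
  case (1 \<epsilon>)
  then have e: "0 < \<epsilon>" "\<epsilon> < \<eta>" by auto
  define \<omega> where "\<omega> = Sup ((\<lambda>y. mat_opnorm (H y - H x)) ` ball x \<epsilon>)"
  have \<omega>: "mat_opnorm (H z - H x) \<le> \<omega>" if "z \<in> ball x \<epsilon>" for z
    unfolding \<omega>_def using that e bdd_above_mat_opnorm_diff[OF hess_cont, of "ball x \<epsilon>"]
    by (intro cSup_upper) (auto simp: subset_iff)
  have "0 \<le> \<omega>" using \<omega>[of x] e mat_opnorm_nonneg[of "H x - H x"] by simp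
  note rem = second_order_remainder_le[OF grad hess \<open>\<epsilon> < \<eta>\<close> \<omega>]
  have "\<bar>Sup (\<phi> ` ball x \<epsilon>) + Inf (\<phi> ` ball x \<epsilon>) - 2 * \<phi> x - \<epsilon>\<^sup>2 * ((H x *v sgn (g x)) \<bullet> sgn (g x))\<bar>
      \<le> \<epsilon> ^ 3 * (mat_opnorm (H x))\<^sup>2 / norm (g x) + \<omega> * \<epsilon>\<^sup>2"
    using rem \<open>0 \<le> \<omega>\<close> e(1) px_nz mat_opnorm_mult_vec_le[of "H x"]
    by (intro Sup_plus_Inf_ball_second_order_model) (auto simp: matrix_vector_mul_linear)
  moreover have "continuous_on (cball x \<epsilon>) \<phi>"
    using e by (intro continuous_on_subset[OF has_derivative_continuous_on[OF grad]]) auto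
  then have "\<bar>(LINT t:{0<..\<epsilon>}|mu_s s. L_phi \<phi> x (t *\<^sub>R sgn (g x)) (t *\<^sub>R sgn (g x)))
      - ((H x *v sgn (g x)) \<bullet> sgn (g x)) * (C_s s * \<epsilon> powr (2 - 2 * s) / (2 - 2 * s))\<bar>
    \<le> \<omega> * (C_s s * \<epsilon> powr (2 - 2 * s) / (2 - 2 * s))"
    using rem s_range e px_nz
    by (intro abs_set_integral_L_phi_mu_s_le) (auto simp: matrix_vector_mul_linear norm_sgn)
  ultimately show ?case
    unfolding \<omega>_def sgn_div_norm[symmetric] using s_range e px_nz
    by (intro c_s_scaled_error_le) auto
qed

end
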